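(* Let $(E,\langle\cdot,\cdot\rangle)$ be a Hilbert space with norm $\|\cdot\|$, let $X$ be a Radon random vector on a probability space with values in $E$ and distribution $P$, let $r\in(0,+\infty)$ with $\int_E\|x\|^r\,dP(x)<+\infty$, let $n\ge1$, and assume that $K=\operatorname{supp}(P)$ is convex. If the $L^r$-distortion function $G_{r,n}^P$ has a strict local minimum at $a=(a_1,\ldots,a_n)\in E^n$, then $a_i\in K$ for every $i\in\{1,\ldots,n\}$. In particular, the following conclusions hold (whenever each $a_i$ is a non-isolated point of $K$): the components $a_1,\ldots,a_n$ are pairwise distinct; if $r\ge1$, then with $\Gamma=\{a_1,\ldots,a_n\}$, for every $i$ and every Borel set $C$ with $W_{a_i}(\Gamma)\subset C\subset V_{a_i}(\Gamma)$ one has $a_i\in\operatorname{argmin}_{y\in E}G_{r,1}^{P(\cdot\mid C)}(y)$; and if $r\ge1$ and (when $r=1$) $P(\{a_i\})=0$ for every $i$, then $\Gamma$ is an $L^r$-stationary $n$-quantizer for $P$ and $\Gamma$ is admissible for $P$. Moreover, if $r\ge2$, $P(\{a_i\})=0$ for every $i\in\{1,\ldots,n\}$ when $r>2$, and $K$ has nonempty interior, then $a_i$ is an interior point of $K$ for every $i$.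
   Context: $\operatorname{supp}(P)$ denotes the support of $P$. For a nonempty finite $\Gamma\subset E$, $d(x,\Gamma)=\min_{b\in\Gamma}\|x-b\|$. For a Borel probability $Q$ on $E$, $G_{r,n}^Q:E^n\to\mathbb R_+$, $G_{r,n}^Q(a_1,\ldots,a_n)=\int_E\min_{1\le i\le n}\|x-a_i\|^r\,dQ(x)$. A strict local minimum at $a$ means there is a neighbourhood $U$ of $a$ in $E^n$ with $G_{r,n}^P(b)>G_{r,n}^P(a)$ for all $b\in U\setminus\{a\}$. For a Borel $C$ with $P(C)>0$, $P(\cdot\mid C)=P(\cdot\cap C)/P(C)$. For finite $\Gamma\subset E$ and $b\in\Gamma$: $V_b(\Gamma)=\{x:\|x-b\|=d(x,\Gamma)\}$, $W_b(\Gamma)=\{x:\|x-b\|<d(x,\Gamma\setminus\{b\})\}$. A Voronoi partition induced by $\Gamma$ is a Borel partition $\{C_b(\Gamma):b\in\Gamma\}$ of $E$ with $C_b(\Gamma)\subset V_b(\Gamma)$. $\Gamma$ is admissible for $P$ if $P\big(\bigcup_{b\in\Gamma}W_b(\Gamma)\big)=1$. For $x\neq0$, $\nabla\|\cdot\|(x)=\langle x,\cdot\rangle/\|x\|\in E^*$ is the Gâteaux derivative of the norm. For $r\ge1$, a set $\Gamma$ with $\operatorname{card}(\Gamma)=n$ (and $P(\Gamma)=0$ if $r=1$) is an $L^r$-stationary $n$-quantizer for $P$ if there is a Voronoi partition $\{C_b(\Gamma)\}$ induced by $\Gamma$ with, for every $b\in\Gamma$, $P(C_b(\Gamma))>0$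 and $\mathbb E\big[\mathbf 1_{C_b(\Gamma)\setminus\{b\}}(X)\|X-b\|^{r-1}\nabla\|\cdot\|(b-X)\big]=0$ in $E^*$ (Gelfand integral). *)

theory Defs
  imports "HOL-Probability.Probability"
begin

definition measure_support :: "'a::topological_space measure \<Rightarrow> 'a set" where
  "measure_support P = {x. \<forall>U. open U \<and> x \<in> U \<longrightarrow> emeasure P U > 0}"

definition radon_measure :: "'a::topological_space measure \<Rightarrow> bool" where
  "radon_measure P \<longleftrightarrow> sets P = sets borel \<and>
     (\<forall>A\<in>sets borel. emeasure P A = (SUP K\<in>{K. compact K \<and> K \<subseteq> A}. emeasure P K))"

definition distortion :: "'a::real_normed_vector measure \<Rightarrow> real \<Rightarrow> nat \<Rightarrow> (nat \<Rightarrow> 'a) \<Rightarrow> real" where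
  "distortion Q r n a = (\<integral>x. (MIN i\<in>{..<n}. norm (x - a i) powr r) \<partial>Q)"

text \<open>Strict local minimum of a function on E^n (product topology; tuples are
  functions nat => E, only indices < n matter).\<close>
definition strict_local_min :: "nat \<Rightarrow> ((nat \<Rightarrow> 'a::metric_space) \<Rightarrow> real) \<Rightarrow> (nat \<Rightarrow> 'a) \<Rightarrow> bool" where
  "strict_local_min n G a \<longleftrightarrow> (\<exists>e>0. \<forall>b. (\<forall>i<n. dist (b i) (a i) < e) \<and> (\<exists>i<n. b i \<noteq> a i)
       \<longrightarrow> G b > G a)"

definition voronoi_V :: "'a::real_normed_vector \<Rightarrow> 'a set \<Rightarrow> 'a set" where
  "voronoi_V b \<Gamma> = {x. \<forall>c\<in>\<Gamma>. norm (x - b) \<le> norm (x - c)}"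

definition voronoi_W :: "'a::real_normed_vector \<Rightarrow> 'a set \<Rightarrow> 'a set" where
  "voronoi_W b \<Gamma> = {x. \<forall>c\<in>\<Gamma> - {b}. norm (x - b) < norm (x - c)}"

definition voronoi_partition :: "('a::real_normed_vector \<Rightarrow> 'a set) \<Rightarrow> 'a set \<Rightarrow> bool" where
  "voronoi_partition C \<Gamma> \<longleftrightarrow>
     (\<forall>b\<in>\<Gamma>. C b \<in> sets borel \<and> C b \<subseteq> voronoi_V b \<Gamma>) \<and>
     (\<forall>b\<in>\<Gamma>. \<forall>c\<in>\<Gamma>. b \<noteq> c \<longrightarrow> C b \<inter> C c = {}) \<and>
     (\<Union>b\<in>\<Gamma>. C b) = UNIV"

definition admissible :: "'a::real_normed_vector measure \<Rightarrow> 'a set \<Rightarrow> bool" where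
  "admissible P \<Gamma> \<longleftrightarrow> emeasure P (\<Union>b\<in>\<Gamma>. voronoi_W b \<Gamma>) = 1"

text \<open>The Gelfand integral in E^* of
  1_{C_b - {b}}(X) |X-b|^{r-1} grad|.|(b - X) vanishes, i.e. for every u in E the scalar
  function x |-> 1_{C_b-{b}}(x) |x-b|^{r-1} <b-x,u>/|b-x| is P-integrable with integral 0.\<close>
definition stationary_quantizer :: "'a::real_inner measure \<Rightarrow> real \<Rightarrow> nat \<Rightarrow> 'a set \<Rightarrow> bool" where
  "stationary_quantizer P r n \<Gamma> \<longleftrightarrow> finite \<Gamma> \<and> card \<Gamma> = n \<and>
     (r = 1 \<longrightarrow> emeasure P \<Gamma> = 0) \<and>
     (\<exists>C. voronoi_partition C \<Gamma> \<and>
        (\<forall>b\<in>\<Gamma>. emeasure P (C b) > 0 \<and>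
           (\<forall>u. integrable P (\<lambda>x. indicator (C b - {b}) x * norm (x - b) powr (r - 1)
                                     * (inner (b - x) u / norm (b - x))) \<and>
                (\<integral>x. indicator (C b - {b}) x * norm (x - b) powr (r - 1)
                       * (inner (b - x) u / norm (b - x)) \<partial>P) = 0)))"

end

theory Submission
  imports Defs
begin

text \<open>If some centre a i lay outside the closed convex support K, moving it slightly towards
  its projection onto K would bring it closer to every point of K without increasing the
  distortion, contradicting strict minimality. The other statements come from a first-order
  condition on each Voronoi cell C of a i: moving a i alone changes the distortion by at most
  the change of the cell distortion y \<mapsto> \<integral> 1_C(x) |x - y|^r dP(x), so for r \<ge> 1 a i is a
  local, hence by convexity a global, minimizer of it, and its directional derivatives, obtained
  by dominated convergence, vanish. This is stationarity. Comparing the cells W and W \<union> D for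
  a set D of ties shows that D is null, i.e. admissibility; differentiating along a supporting
  normal at a boundary point of K contradicts the positive mass of K near a i. A repeated centre
  could be moved without changing the distortion, so the centres are distinct.\<close>

section \<open>Projections and supporting hyperplanes in Hilbert spaces\<close>

lemma norm_diff_scaleR_square:
  fixes v w :: "'a::real_inner"
  shows "norm (v - t *\<^sub>R w)^2 = norm v^2 - 2 * t * inner v w + t^2 * norm w^2"
  unfolding power2_norm_eq_inner
  by (simp add: inner_diff_left inner_diff_right inner_commute power2_eq_square algebra_simps)

lemma Cauchy_if_dist_le_add:
  fixes s :: "nat \<Rightarrow> 'a::metric_space"
  assumes dist: "\<And>m k. dist (s m) (s k) \<le> \<gamma> m + \<gamma> k" and lim: "\<gamma> \<longlonglongrightarrow> 0"
  shows "Cauchy s"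
proof (rule metric_CauchyI)
  fix e :: real assume "0 < e"
  then obtain M where M: "\<And>k. k \<ge> M \<Longrightarrow> \<bar>\<gamma> k\<bar> < e / 2"
    using lim unfolding LIMSEQ_iff by (metis half_gt_zero real_norm_def diff_zero)
  have "dist (s m) (s k) < e" if "m \<ge> M" "k \<ge> M" for m k
    using dist[of m k] M[OF that(1)] M[OF that(2)] by linarith
  then show "\<exists>M. \<forall>m\<ge>M. \<forall>k\<ge>M. dist (s m) (s k) < e" by blast
qed

text \<open>The parallelogram law: the midpoint of s m and s k lies in S, so it is at distance at least
  infdist z S from z.\<close>
lemma Cauchy_minimizing_sequence:
  fixes S :: "'a::real_inner set"
  assumes "convex S" "\<And>k. s k \<in> S" "\<And>k. dist z (s k) \<le> infdist z S + \<epsilon> k"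
    and "\<epsilon> \<longlonglongrightarrow> 0" "\<And>k. 0 \<le> \<epsilon> k"
  shows "Cauchy s"
proof -
  define d where "d = infdist z S"
  define \<beta> where "\<beta> k = 2 * ((d + \<epsilon> k)^2 - d^2)" for k
  have d0: "0 \<le> d" unfolding d_def by (rule infdist_nonneg)
  have \<beta>0: "0 \<le> \<beta> k" for k
    unfolding \<beta>_def using d0 assms(5)[of k] by (simp add: power_mono)
  have close: "norm (z - s j)^2 \<le> (d + \<epsilon> j)^2" for j
    using assms(3)[of j] by (simp add: d_def dist_norm power_mono)
  have "norm (s m - s k)^2 \<le> \<beta> m + \<beta> k" for m k
  proof -
    have "midpoint (s m) (s k) \<in> S"
      unfolding midpoint_def scaleR_add_right by (rule convexD[OF assms(1,2,2)]) auto
    then have "d \<le> norm (z - midpoint (s m) (s k))"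
      unfolding d_def using infdist_le[of _ S z] by (simp add: dist_norm)
    then have "d^2 \<le> norm (z - midpoint (s m) (s k))^2" using d0 by (simp add: power_mono)
    moreover have "norm (s m - s k)^2 = 2 * norm (z - s m)^2 + 2 * norm (z - s k)^2
        - 4 * norm (z - midpoint (s m) (s k))^2"
      unfolding power2_norm_eq_inner midpoint_def
      by (simp add: inner_diff_left inner_diff_right inner_add_left inner_add_right inner_commute algebra_simps)
    ultimately show ?thesis unfolding \<beta>_def using close[of m] close[of k] by argo
  qed
  have "dist (s m) (s k) \<le> sqrt (\<beta> m) + sqrt (\<beta> k)" for m k
  proof -
    have "dist (s m) (s k) = sqrt (norm (s m - s k)^2)" by (simp add: dist_norm)
    also have "\<dots> \<le> sqrt (\<beta> m + \<beta> k)" by (rule real_sqrt_le_mono) fact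
    also have "\<dots> \<le> sqrt (\<beta> m) + sqrt (\<beta> k)" by (intro sqrt_add_le_add_sqrt \<beta>0)
    finally show ?thesis .
  qed
  moreover have "(\<lambda>k. sqrt (\<beta> k)) \<longlonglongrightarrow> 0"
    unfolding \<beta>_def using tendsto_intros(1)[of d] assms(4)
    by (auto intro!: tendsto_eq_intros)
  ultimately show "Cauchy s" by (rule Cauchy_if_dist_le_add)
qed

lemma closed_convex_nearest_point_exists:
  fixes S :: "'a::{real_inner,complete_space} set"
  assumes "closed S" "convex S" "S \<noteq> {}"
  obtains p where "p \<in> S" "\<And>w. w \<in> S \<Longrightarrow> dist z p \<le> dist z w"
proof -
  define d where "d = infdist z S"
  define \<epsilon> :: "nat \<Rightarrow> real" where "\<epsilon> k = 1 / (real k + 1)" for k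
  have \<epsilon>: "\<epsilon> \<longlonglongrightarrow> 0" "\<And>k. 0 < \<epsilon> k"
    unfolding \<epsilon>_def using LIMSEQ_inverse_real_of_nat by (auto simp: inverse_eq_divide add.commute)
  have "\<exists>s\<in>S. dist z s < d + \<epsilon> k" for k
  proof -
    have "Inf (dist z ` S) < d + \<epsilon> k"
      unfolding d_def infdist_notempty[OF \<open>S \<noteq> {}\<close>] using \<epsilon>(2)[of k] by simp
    then show ?thesis using cInf_lessD[of "dist z ` S"] \<open>S \<noteq> {}\<close> by blast
  qed
  then obtain s where s: "\<And>k. s k \<in> S" "\<And>k. dist z (s k) < d + \<epsilon> k"
    by metis
  have "Cauchy s"
    by (rule Cauchy_minimizing_sequence[where z = z, OF \<open>convex S\<close> s(1) _ \<epsilon>(1)])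
      (use s(2) \<epsilon>(2) in \<open>auto simp: d_def less_imp_le\<close>)
  then obtain p where lim: "s \<longlonglongrightarrow> p" using Cauchy_convergent_iff convergent_def by blast
  have "p \<in> S" using closed_sequentially[OF \<open>closed S\<close>] s(1) lim by blast
  moreover have "dist z p \<le> d"
  proof (rule LIMSEQ_le)
    show "(\<lambda>k. dist z (s k)) \<longlonglongrightarrow> dist z p" by (intro tendsto_intros lim)
    show "(\<lambda>k. d + \<epsilon> k) \<longlonglongrightarrow> d" using tendsto_add[OF tendsto_const \<epsilon>(1)] by simp
  qed (use s(2) less_imp_le in blast)
  ultimately show ?thesis using infdist_le[of _ S z] that by (force simp: d_def)
qed

lemma nearest_point_obtuse:
  fixes S :: "'a::real_inner set"
  assumes "convex S" "p \<in> S" "\<And>w. w \<in> S \<Longrightarrow> dist z p \<le> dist z w" "w \<in> S"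
  shows "inner (z - p) (w - p) \<le> 0"
proof -
  have le: "2 * inner (z - p) (w - p) \<le> t * norm (w - p)^2" if t: "0 < t" "t \<le> 1" for t
  proof -
    have "(1 - t) *\<^sub>R p + t *\<^sub>R w \<in> S" using assms t by (intro convexD) auto
    then have "dist z p \<le> dist z ((1 - t) *\<^sub>R p + t *\<^sub>R w)" by (rule assms(3))
    also have "dist z ((1 - t) *\<^sub>R p + t *\<^sub>R w) = norm ((z - p) - t *\<^sub>R (w - p))"
      by (simp add: dist_norm algebra_simps)
    finally have "norm (z - p) \<le> norm ((z - p) - t *\<^sub>R (w - p))" by (simp add: dist_norm)
    then have "norm (z - p)^2 \<le> norm ((z - p) - t *\<^sub>R (w - p))^2" by (simp add: power_mono)
    then have "t * (2 * inner (z - p) (w - p)) \<le> t * (t * norm (w - p)^2)"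
      unfolding norm_diff_scaleR_square by (simp add: power2_eq_square algebra_simps)
    then show ?thesis using t by simp
  qed
  have "(\<lambda>k. inverse (real (Suc k)) * norm (w - p)^2) \<longlonglongrightarrow> 0 * norm (w - p)^2"
    by (intro tendsto_mult LIMSEQ_inverse_real_of_nat tendsto_const)
  moreover have "2 * inner (z - p) (w - p) \<le> inverse (real (Suc k)) * norm (w - p)^2" for k
    by (rule le) (auto simp: field_simps)
  ultimately have "2 * inner (z - p) (w - p) \<le> 0 * norm (w - p)^2"
    by (intro LIMSEQ_le_const) auto
  then show ?thesis by simp
qed

lemma closed_convex_projection_exists:
  fixes S :: "'a::{real_inner,complete_space} set"
  assumes "closed S" "convex S" "S \<noteq> {}"
  obtains p where "p \<in> S" "\<And>w. w \<in> S \<Longrightarrow> inner (z - p) (w - p) \<le> 0"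
  using closed_convex_nearest_point_exists[OF assms] nearest_point_obtuse[OF \<open>convex S\<close>] by metis

lemma norm_diff_le_toward_projection:
  fixes a p x :: "'a::real_inner"
  assumes "inner (a - p) (x - p) \<le> 0" "0 \<le> t" "t \<le> 1"
  shows "norm (x - (a + t *\<^sub>R (p - a))) \<le> norm (x - a)"
proof -
  have "norm (p - a)^2 \<le> inner (x - a) (p - a)"
    using assms(1) unfolding power2_norm_eq_inner
    by (simp add: inner_diff_left inner_diff_right inner_commute)
  then have "2 * t * norm (p - a)^2 \<le> 2 * t * inner (x - a) (p - a)"
    using assms(2) by (simp add: mult_left_mono)
  moreover have "t * t \<le> t" using assms(2,3) by (simp add: mult_left_le)
  then have "t^2 * norm (p - a)^2 \<le> 2 * t * norm (p - a)^2"
    using assms(2) by (intro mult_right_mono) (auto simp: power2_eq_square)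
  ultimately have "norm ((x - a) - t *\<^sub>R (p - a))^2 \<le> norm (x - a)^2"
    unfolding norm_diff_scaleR_square by linarith
  then have "norm ((x - a) - t *\<^sub>R (p - a)) \<le> norm (x - a)" by (rule power2_le_imp_le) simp
  then show ?thesis by (simp add: diff_diff_eq)
qed

lemma mem_interior_convex_shrink_normed:
  fixes S :: "'a::real_normed_vector set"
  assumes "convex S" "c \<in> interior S" "x \<in> S" "0 < e" "e \<le> 1"
  shows "x - e *\<^sub>R (x - c) \<in> interior S"
proof -
  obtain d where "0 < d" and d: "ball c d \<subseteq> S"
    using \<open>c \<in> interior S\<close> by (auto simp: mem_interior)
  have "ball (x - e *\<^sub>R (x - c)) (e * d) \<subseteq> S"
  proof
    fix y assume y: "y \<in> ball (x - e *\<^sub>R (x - c)) (e * d)"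
    define c' where "c' = c + (1 / e) *\<^sub>R (y - (x - e *\<^sub>R (x - c)))"
    have "dist c c' < d"
      using y \<open>0 < e\<close> by (simp add: c'_def dist_norm norm_minus_commute pos_divide_less_eq mult.commute)
    then have "(1 - e) *\<^sub>R x + e *\<^sub>R c' \<in> S"
      using d assms by (intro convexD) auto
    also have "(1 - e) *\<^sub>R x + e *\<^sub>R c' = y"
      using \<open>0 < e\<close> by (simp add: c'_def algebra_simps)
    finally show "y \<in> S" .
  qed
  then show ?thesis using \<open>0 < d\<close> \<open>0 < e\<close> by (auto simp: mem_interior intro!: exI[of _ "e * d"])
qed

text \<open>The normal is the residual of the projection of a - c onto the closed cone generated by
  K - a; a - c lies outside this cone because a is not an interior point.\<close>
lemma supporting_hyperplane_non_interior:
  fixes K :: "'a::{real_inner,complete_space} set"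
  assumes "convex K" "a \<notin> interior K" "c \<in> interior K"
  obtains \<nu> where "\<nu> \<noteq> 0" "\<And>x. x \<in> K \<Longrightarrow> inner (x - a) \<nu> \<le> 0"
proof -
  define T where "T = closure (cone hull ((\<lambda>x. x - a) ` K))"
  have "convex T" "closed T" "cone T"
    unfolding T_def using \<open>convex K\<close>
    by (auto intro: convex_closure convex_cone_hull convex_translation_subtract cone_closure cone_cone_hull)
  have T: "x - a \<in> T" if "x \<in> K" for x
    unfolding T_def using that by (intro closure_subset[THEN subsetD] hull_inc imageI)
  have "0 \<in> T"
    using mem_cone[OF \<open>cone T\<close> T[OF interior_subset[THEN subsetD, OF assms(3)]], of 0] by simp
  have "a - c \<notin> T"
  proof
    assume "a - c \<in> T"
    obtain \<rho> where "0 < \<rho>" "ball c \<rho> \<subseteq> K" using assms(3) by (auto simp: mem_interior)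
    obtain w where "w \<in> cone hull ((\<lambda>x. x - a) ` K)" "dist w (a - c) < \<rho>"
      using \<open>a - c \<in> T\<close> \<open>0 < \<rho>\<close> unfolding T_def closure_approachable by blast
    then obtain t x where w: "w = t *\<^sub>R (x - a)" "0 \<le> t" "x \<in> K"
      by (auto simp: cone_hull_expl)
    have "a - w \<in> ball c \<rho>"
      using \<open>dist w (a - c) < \<rho>\<close> by (simp add: dist_norm algebra_simps)
    then have "a - w \<in> interior K"
      using interior_maximal[OF \<open>ball c \<rho> \<subseteq> K\<close> open_ball] by blast
    then have "x - (1 / (1 + t)) *\<^sub>R (x - (a - w)) \<in> interior K"
      using w by (intro mem_interior_convex_shrink_normed[OF \<open>convex K\<close>]) auto
    also have "x - (1 / (1 + t)) *\<^sub>R (x - (a - w)) = a"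
    proof -
      have "x - (a - w) = (1 + t) *\<^sub>R (x - a)" by (simp add: w(1) algebra_simps)
      then show ?thesis using w(2) by simp
    qed
    finally show False using assms(2) by simp
  qed
  have "T \<noteq> {}" using \<open>0 \<in> T\<close> by blast
  then obtain p where "p \<in> T" and p: "\<And>w. w \<in> T \<Longrightarrow> inner ((a - c) - p) (w - p) \<le> 0"
    using closed_convex_projection_exists[OF \<open>closed T\<close> \<open>convex T\<close>] by metis
  define \<nu> where "\<nu> = (a - c) - p"
  have "inner \<nu> (0 - p) \<le> 0" "inner \<nu> (2 *\<^sub>R p - p) \<le> 0"
    using p[OF \<open>0 \<in> T\<close>] p[OF mem_cone[OF \<open>cone T\<close> \<open>p \<in> T\<close>, of 2]] by (simp_all add: \<nu>_def)
  then have "inner \<nu> p = 0" by (simp add: inner_diff_right scaleR_2 inner_add_right)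
  then have "inner (x - a) \<nu> \<le> 0" if "x \<in> K" for x
    using p[OF T[OF that]] by (simp add: \<nu>_def[symmetric] inner_diff_right inner_commute)
  moreover have "\<nu> \<noteq> 0" using \<open>a - c \<notin> T\<close> \<open>p \<in> T\<close> by (auto simp: \<nu>_def)
  ultimately show ?thesis using that by blast
qed

lemma inner_pos_if_equidistant:
  fixes x b c :: "'a::real_inner"
  assumes "norm (x - b) = norm (x - c)" "b \<noteq> c"
  shows "0 < inner (x - c) (b - c)"
proof -
  have "x - b = (x - c) - 1 *\<^sub>R (b - c)" by simp
  then have "norm (x - b)^2 = norm (x - c)^2 - 2 * inner (x - c) (b - c) + norm (b - c)^2"
    using norm_diff_scaleR_square[of "x - c" 1 "b - c"] by (simp only:) simp
  moreover have "norm (x - b)^2 = norm (x - c)^2" using assms(1) by simp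
  moreover have "0 < norm (b - c)^2" using assms(2) by simp
  ultimately show ?thesis by linarith
qed

lemma interior_convex_meets_ball:
  fixes K :: "'a::real_normed_vector set"
  assumes "convex K" "a \<in> K" "c \<in> interior K" "0 < \<delta>"
  obtains m where "m \<in> interior K" "dist a m < \<delta>"
proof -
  have pos: "0 < norm (a - c) + 1" using norm_ge_zero[of "a - c"] by linarith
  define s where "s = min 1 (\<delta> / (norm (a - c) + 1))"
  have s: "0 < s" "s \<le> 1" using assms(4) pos by (auto simp: s_def)
  define m where "m = a - s *\<^sub>R (a - c)"
  have "m \<in> interior K"
    unfolding m_def by (rule mem_interior_convex_shrink_normed[OF assms(1,3,2) s])
  moreover have "dist a m < \<delta>"
  proof -
    have "dist a m = s * norm (a - c)" using s by (simp add: m_def dist_norm)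
    also have "\<dots> < s * (norm (a - c) + 1)" using s by simp
    also have "\<dots> \<le> \<delta>" using pos_le_divide_eq[OF pos, of s \<delta>] by (simp add: s_def)
    finally show ?thesis .
  qed
  ultimately show ?thesis using that by blast
qed

lemma inner_lt_zero_on_interior:
  fixes K :: "'a::real_inner set"
  assumes "x \<in> interior K" "\<nu> \<noteq> 0" "\<And>y. y \<in> K \<Longrightarrow> inner (y - a) \<nu> \<le> 0"
  shows "inner (x - a) \<nu> < 0"
proof -
  obtain e where "0 < e" "ball x e \<subseteq> K" using assms(1) by (auto simp: mem_interior)
  define s where "s = e / (2 * norm \<nu>)"
  have "0 < s" using \<open>0 < e\<close> \<open>\<nu> \<noteq> 0\<close> by (simp add: s_def)
  have "dist x (x + s *\<^sub>R \<nu>) = e / 2" using \<open>0 < e\<close> \<open>\<nu> \<noteq> 0\<close> by (simp add: s_def dist_norm)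
  then have "x + s *\<^sub>R \<nu> \<in> K" using \<open>0 < e\<close> \<open>ball x e \<subseteq> K\<close> by auto
  then have "inner (x + s *\<^sub>R \<nu> - a) \<nu> \<le> 0" by (rule assms(3))
  moreover have "inner (x + s *\<^sub>R \<nu> - a) \<nu> = inner (x - a) \<nu> + s * norm \<nu>^2"
    by (simp add: inner_add_left inner_diff_left dot_square_norm)
  moreover have "0 < s * norm \<nu>^2" using \<open>0 < s\<close> \<open>\<nu> \<noteq> 0\<close> by simp
  ultimately show ?thesis by linarith
qed

section \<open>The function x \<mapsto> |x - y|^r\<close>

lemma norm_diff_powr_le:
  fixes x y :: "'a::real_normed_vector"
  assumes "0 \<le> r"
  shows "norm (x - y) powr r \<le> 2 powr r * (norm x powr r + norm y powr r)"
proof -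
  have "norm (x - y) powr r \<le> (2 * max (norm x) (norm y)) powr r"
    using assms norm_triangle_ineq4[of x y] by (intro powr_mono2) auto
  also have "\<dots> = 2 powr r * max (norm x) (norm y) powr r" by (simp add: powr_mult)
  also have "max (norm x) (norm y) powr r \<le> norm x powr r + norm y powr r"
    by (simp add: max_def)
  finally show ?thesis by (simp add: mult_left_mono)
qed

lemma convex_on_powr_nonneg:
  assumes "1 \<le> p"
  shows "convex_on {0..} (\<lambda>t::real. t powr p)"
proof (rule convex_onI)
  fix a b u :: real assume ab: "a \<in> {0..}" "b \<in> {0..}" and u: "0 < u" "u < 1"
  have small: "v powr p \<le> v" if "0 \<le> v" "v \<le> 1" for v :: real
    using powr_mono'[OF \<open>1 \<le> p\<close> that] that by simp
  consider "0 < a" "0 < b" | "a = 0" | "b = 0" using ab by force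
  then show "((1 - u) *\<^sub>R a + u *\<^sub>R b) powr p \<le> (1 - u) * a powr p + u * b powr p"
  proof cases
    case 1
    then show ?thesis using convex_onD[OF powr_convex[OF \<open>1 \<le> p\<close>], of u a b] u by auto
  next
    case 2
    then show ?thesis using small[of u] u ab by (simp add: powr_mult mult_right_mono)
  next
    case 3
    then show ?thesis using small[of "1 - u"] u ab by (simp add: powr_mult mult_right_mono)
  qed
qed (simp add: convex_real_interval)

lemma convex_on_norm_diff_powr:
  fixes x :: "'a::real_normed_vector"
  assumes "1 \<le> p"
  shows "convex_on UNIV (\<lambda>y. norm (x - y) powr p)"
proof (rule convex_onI)
  fix y z :: 'a and u :: real assume u: "0 < u" "u < 1"
  have "norm (x - ((1 - u) *\<^sub>R y + u *\<^sub>R z)) = norm ((1 - u) *\<^sub>R (x - y) + u *\<^sub>R (x - z))"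
    by (simp add: algebra_simps)
  also have "\<dots> \<le> (1 - u) * norm (x - y) + u * norm (x - z)"
    using norm_triangle_ineq[of "(1 - u) *\<^sub>R (x - y)" "u *\<^sub>R (x - z)"] u by simp
  finally have "norm (x - ((1 - u) *\<^sub>R y + u *\<^sub>R z)) powr p
      \<le> ((1 - u) * norm (x - y) + u * norm (x - z)) powr p"
    using assms by (intro powr_mono2) auto
  also have "\<dots> \<le> (1 - u) * norm (x - y) powr p + u * norm (x - z) powr p"
    using convex_onD[OF convex_on_powr_nonneg[OF assms], of u "norm (x - y)" "norm (x - z)"] u by simp
  finally show "norm (x - ((1 - u) *\<^sub>R y + u *\<^sub>R z)) powr p
      \<le> (1 - u) * norm (x - y) powr p + u * norm (x - z) powr p" .
qed simp

lemma convex_on_norm_diff_powr_line: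
  fixes x c u :: "'a::real_normed_vector"
  assumes "1 \<le> p"
  shows "convex_on UNIV (\<lambda>s. norm (x - (c + s *\<^sub>R u)) powr p)"
proof (rule convex_onI)
  fix s1 s2 v :: real assume "0 < v" "v < 1"
  have "c + ((1 - v) *\<^sub>R s1 + v *\<^sub>R s2) *\<^sub>R u = (1 - v) *\<^sub>R (c + s1 *\<^sub>R u) + v *\<^sub>R (c + s2 *\<^sub>R u)"
    by (simp add: algebra_simps)
  then show "norm (x - (c + ((1 - v) *\<^sub>R s1 + v *\<^sub>R s2) *\<^sub>R u)) powr p
      \<le> (1 - v) * norm (x - (c + s1 *\<^sub>R u)) powr p + v * norm (x - (c + s2 *\<^sub>R u)) powr p"
    using convex_onD[OF convex_on_norm_diff_powr[OF assms, of x], of v] \<open>0 < v\<close> \<open>v < 1\<close> by simp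
qed simp

lemma convex_on_difference_quotient_bounds:
  fixes h :: "real \<Rightarrow> real"
  assumes "convex_on UNIV h" "0 < t" "t \<le> 1"
  shows "h 0 - h (-1) \<le> (h t - h 0) / t" "(h t - h 0) / t \<le> h 1 - h 0"
proof -
  have "h 0 - h (-1) \<le> (h (-1) - h t) / (-1 - t)"
    using convex_on_slope_le(1)[OF assms(1), of "-1" t 0] assms by simp
  also have "\<dots> \<le> (h t - h 0) / t"
    using convex_on_slope_le(2)[OF assms(1), of "-1" t 0] assms by (simp add: field_simps)
  finally show "h 0 - h (-1) \<le> (h t - h 0) / t" .
  show "(h t - h 0) / t \<le> h 1 - h 0"
  proof (cases "t = 1")
    case False
    then show ?thesis
      using convex_on_slope_le(1)[OF assms(1), of 0 1 t] assms by (simp add: field_simps)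
  qed simp
qed

lemma has_real_derivative_norm_diff_powr:
  fixes x c u :: "'a::real_inner"
  assumes "x \<noteq> c"
  shows "((\<lambda>t. norm (x - (c + t *\<^sub>R u)) powr r) has_real_derivative
     r * (norm (x - c) powr (r - 1) * (inner (c - x) u / norm (c - x)))) (at 0)"
proof -
  have "((\<lambda>t. norm (x - (c + t *\<^sub>R u))) has_real_derivative inner (c - x) u / norm (c - x)) (at 0)"
  proof -
    have "((\<lambda>t. x - (c + t *\<^sub>R u)) has_derivative (\<lambda>t. - (t *\<^sub>R u))) (at 0)"
      by (auto intro!: derivative_eq_intros)
    from has_derivative_compose[OF this has_derivative_norm] assms
    have "((\<lambda>t. norm (x - (c + t *\<^sub>R u))) has_derivative (\<lambda>t. inner (- (t *\<^sub>R u)) (sgn (x - c)))) (at 0)"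
      by simp
    moreover have "(\<lambda>t. inner (- (t *\<^sub>R u)) (sgn (x - c))) = (*) (inner (c - x) u / norm (c - x))"
      using assms by (auto simp: fun_eq_iff sgn_div_norm inner_commute inner_diff_right norm_minus_commute field_simps)
    ultimately show ?thesis by (simp add: has_field_derivative_def)
  qed
  from DERIV_fun_powr[OF this, of r] assms
  have "((\<lambda>t. norm (x - (c + t *\<^sub>R u)) powr r) has_real_derivative
     r * norm (x - c) powr (r - 1) * (inner (c - x) u / norm (c - x))) (at 0)"
    by simp
  then show ?thesis by (simp only: mult.assoc)
qed

lemma DERIV_difference_quotients_LIMSEQ:
  fixes f :: "real \<Rightarrow> real"
  assumes "(f has_real_derivative D) (at 0)"
  shows "(\<lambda>k. (f (inverse (real (Suc k))) - f 0) / inverse (real (Suc k))) \<longlonglongrightarrow> D"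
proof -
  have "filterlim (\<lambda>k. inverse (real (Suc k))) (at 0) sequentially"
    unfolding filterlim_at using LIMSEQ_inverse_real_of_nat by auto
  from filterlim_compose[OF assms[unfolded has_field_derivative_iff] this] show ?thesis by simp
qed

text \<open>At x = c the limit is 0, which the right-hand side matches because 0 powr (r - 1) = 0.\<close>
lemma norm_diff_powr_difference_quotients_LIMSEQ:
  fixes x c u :: "'a::real_inner"
  assumes "x \<noteq> c \<or> 1 < r"
  shows "(\<lambda>k. (norm (x - (c + inverse (real (Suc k)) *\<^sub>R u)) powr r - norm (x - c) powr r)
      / inverse (real (Suc k))) \<longlonglongrightarrow> r * (norm (x - c) powr (r - 1) * (inner (c - x) u / norm (c - x)))"
proof (cases "x = c")
  case False
  then show ?thesis
    using DERIV_difference_quotients_LIMSEQ[OF has_real_derivative_norm_diff_powr[OF False]] by simp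
next
  case True
  then have "1 < r" using assms by simp
  have "(norm (x - (c + t *\<^sub>R u)) powr r - norm (x - c) powr r) / t = t powr (r - 1) * norm u powr r"
    if "0 < t" for t :: real
    using True that \<open>1 < r\<close> by (simp add: powr_mult powr_diff)
  moreover have "(\<lambda>k. inverse (real (Suc k)) powr (r - 1) * norm u powr r) \<longlonglongrightarrow> 0 * norm u powr r"
    using \<open>1 < r\<close> by (intro tendsto_mult tendsto_zero_powrI LIMSEQ_inverse_real_of_nat tendsto_const) auto
  ultimately show ?thesis using True by simp
qed

section \<open>Voronoi cells\<close>

lemma Min_le_Min_if_dominated:
  fixes f g :: "'b \<Rightarrow> 'c::linorder"
  assumes "finite I" "I \<noteq> {}" "\<And>j. j \<in> I \<Longrightarrow> \<exists>k\<in>I. f k \<le> g j"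
  shows "(MIN k\<in>I. f k) \<le> (MIN j\<in>I. g j)"
  using assms by (subst Min_ge_iff) (auto simp: Min_le_iff)

lemma open_voronoi_W: "finite \<Gamma> \<Longrightarrow> open (voronoi_W b \<Gamma>)"
proof -
  assume "finite \<Gamma>"
  have "voronoi_W b \<Gamma> = (\<Inter>c\<in>\<Gamma> - {b}. {x. norm (x - b) < norm (x - c)})"
    unfolding voronoi_W_def by auto
  also have "open \<dots>"
    using \<open>finite \<Gamma>\<close> by (intro open_INT ballI open_Collect_less continuous_intros) auto
  finally show ?thesis .
qed

lemma closed_voronoi_V: "closed (voronoi_V b \<Gamma>)"
proof -
  have "voronoi_V b \<Gamma> = (\<Inter>c\<in>\<Gamma>. {x. norm (x - b) \<le> norm (x - c)})"
    unfolding voronoi_V_def by auto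
  also have "closed \<dots>" by (intro closed_INT ballI closed_Collect_le continuous_intros)
  finally show ?thesis .
qed

lemma voronoi_W_subset_V: "voronoi_W b \<Gamma> \<subseteq> voronoi_V b \<Gamma>"
  unfolding voronoi_W_def voronoi_V_def by (auto intro: less_imp_le)

lemma ball_subset_voronoi_W:
  assumes "finite \<Gamma>"
  obtains d where "0 < d" "ball b d \<subseteq> voronoi_W b \<Gamma>"
proof -
  obtain d where "0 < d" and d: "\<And>c. c \<in> \<Gamma> \<Longrightarrow> c \<noteq> b \<Longrightarrow> d \<le> dist b c"
    using finite_set_avoid[OF assms, of b] by blast
  have "ball b (d / 2) \<subseteq> voronoi_W b \<Gamma>"
  proof
    fix x assume "x \<in> ball b (d / 2)"
    then have "norm (x - b) < d / 2" by (simp add: dist_norm norm_minus_commute)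
    moreover have "d \<le> norm (x - b) + norm (x - c)" if "c \<in> \<Gamma> - {b}" for c
      using d[of c] that norm_triangle_ineq4[of "x - c" "x - b"]
      by (simp add: dist_norm norm_minus_commute)
    ultimately show "x \<in> voronoi_W b \<Gamma>" unfolding voronoi_W_def by force
  qed
  then show ?thesis using \<open>0 < d\<close> that[of "d / 2"] by simp
qed

lemma voronoi_V_cover:
  fixes a :: "nat \<Rightarrow> 'a::real_normed_vector"
  assumes "0 < n"
  shows "\<exists>i<n. x \<in> voronoi_V (a i) (a ` {..<n})"
proof -
  have "(MIN j\<in>{..<n}. norm (x - a j)) \<in> (\<lambda>j. norm (x - a j)) ` {..<n}"
    using assms by (intro Min_in) auto
  then obtain i where "i < n" and i: "norm (x - a i) = (MIN j\<in>{..<n}. norm (x - a j))"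
    by auto
  then have "x \<in> voronoi_V (a i) (a ` {..<n})"
    unfolding voronoi_V_def by (auto intro: Min_le)
  then show ?thesis using \<open>i < n\<close> by blast
qed

lemma Min_norm_diff_powr_on_voronoi_V:
  fixes a :: "nat \<Rightarrow> 'a::real_normed_vector"
  assumes "0 \<le> r" "i < n" "x \<in> voronoi_V (a i) (a ` {..<n})"
  shows "(MIN j\<in>{..<n}. norm (x - a j) powr r) = norm (x - a i) powr r"
proof (rule antisym)
  show "(MIN j\<in>{..<n}. norm (x - a j) powr r) \<le> norm (x - a i) powr r"
    using assms(2) by (intro Min_le) auto
  have "norm (x - a i) powr r \<le> norm (x - a j) powr r" if "j < n" for j
    using assms that unfolding voronoi_V_def by (auto intro: powr_mono2)
  then show "norm (x - a i) powr r \<le> (MIN j\<in>{..<n}. norm (x - a j) powr r)"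
    using assms(2) by (subst Min_ge_iff) auto
qed

lemma inner_neg_on_voronoi_tie:
  fixes a :: "nat \<Rightarrow> 'a::real_inner"
  assumes "i < n" "k < n" "a k \<noteq> a i"
    and "x \<in> voronoi_V (a i) (a ` {..<n})" "x \<in> voronoi_V (a k) (a ` {..<n})"
  shows "inner (a i - x) (a k - a i) < 0"
proof -
  have "norm (x - a i) \<le> norm (x - a k)" "norm (x - a k) \<le> norm (x - a i)"
    using assms unfolding voronoi_V_def by auto
  then have "0 < inner (x - a i) (a k - a i)"
    using assms(3) by (intro inner_pos_if_equidistant) auto
  then show ?thesis by (simp add: inner_diff_left)
qed

lemma Min_norm_diff_powr_update_le:
  fixes a :: "nat \<Rightarrow> 'a::real_normed_vector"
  assumes "0 \<le> r" "i < n" "x \<notin> voronoi_W (a i) (a ` {..<n})"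
  shows "(MIN j\<in>{..<n}. norm (x - (a(i := y)) j) powr r) \<le> (MIN j\<in>{..<n}. norm (x - a j) powr r)"
proof -
  obtain k where k: "k < n" "a k \<noteq> a i" "norm (x - a k) \<le> norm (x - a i)"
    using assms(3) unfolding voronoi_W_def by (auto simp: not_less)
  have "\<exists>l\<in>{..<n}. norm (x - (a(i := y)) l) powr r \<le> norm (x - a j) powr r" if "j < n" for j
  proof (cases "j = i")
    case True
    then show ?thesis using k assms(1) by (intro bexI[of _ k] powr_mono2) auto
  qed (use that in auto)
  then show ?thesis using assms(2) by (intro Min_le_Min_if_dominated) auto
qed

text \<open>Ties are broken in favour of the centre with the least index.\<close>
lemma voronoi_partition_exists:
  fixes a :: "nat \<Rightarrow> 'a::real_normed_vector"
  assumes "0 < n"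
  obtains C where "voronoi_partition C (a ` {..<n})"
    "\<And>i. i < n \<Longrightarrow> voronoi_W (a i) (a ` {..<n}) \<subseteq> C (a i)"
proof -
  let ?\<Gamma> = "a ` {..<n}"
  define first where "first x = (LEAST j. j < n \<and> x \<in> voronoi_V (a j) ?\<Gamma>)" for x
  have first: "first x < n" "x \<in> voronoi_V (a (first x)) ?\<Gamma>" for x
    using LeastI_ex[OF voronoi_V_cover[OF assms]] unfolding first_def by auto
  have [measurable]: "voronoi_V b ?\<Gamma> \<in> sets borel" for b
    by (intro borel_closed closed_voronoi_V)
  have "first \<in> borel \<rightarrow>\<^sub>M count_space UNIV"
    unfolding first_def by measurable
  define C where "C b = {x. a (first x) = b}" for b
  have "voronoi_partition C ?\<Gamma>"
    unfolding voronoi_partition_def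
  proof (intro conjI ballI impI)
    show "C b \<in> sets borel" for b
      using measurable_sets_Collect[OF \<open>first \<in> borel \<rightarrow>\<^sub>M count_space UNIV\<close>, of "\<lambda>j. a j = b"]
      by (simp add: C_def)
    show "C b \<subseteq> voronoi_V b ?\<Gamma>" for b
      using first(2) by (auto simp: C_def)
    show "C b \<inter> C c = {}" if "b \<noteq> c" for b c
      using that by (auto simp: C_def)
    show "(\<Union>b\<in>?\<Gamma>. C b) = UNIV"
      by (auto simp: C_def) (metis first(1) lessThan_iff)
  qed
  moreover have "voronoi_W (a i) ?\<Gamma> \<subseteq> C (a i)" if "i < n" for i
  proof
    fix x assume x: "x \<in> voronoi_W (a i) ?\<Gamma>"
    have "\<not> norm (x - a i) < norm (x - a (first x))"
      using first[of x] that unfolding voronoi_V_def by (auto simp: not_less)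
    then show "x \<in> C (a i)" using x first(1)[of x] unfolding voronoi_W_def C_def by blast
  qed
  ultimately show ?thesis using that by blast
qed

section \<open>Support of a Radon measure\<close>

lemma measure_supportD: "x \<in> measure_support P \<Longrightarrow> open U \<Longrightarrow> x \<in> U \<Longrightarrow> 0 < emeasure P U"
  unfolding measure_support_def by auto

lemma closed_measure_support: "closed (measure_support P)"
  unfolding closed_def
proof (rule open_subopen[THEN iffD2], intro ballI)
  fix x assume "x \<in> - measure_support P"
  then obtain U where U: "open U" "x \<in> U" "\<not> 0 < emeasure P U"
    unfolding measure_support_def by auto
  then have "U \<subseteq> - measure_support P" using measure_supportD[of _ P U] by auto
  then show "\<exists>T. open T \<and> x \<in> T \<and> T \<subseteq> - measure_support P" using U by auto
qed

text \<open>Inner regularity reduces this to compact sets, which are covered by finitely many null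
  open sets.\<close>
lemma emeasure_compl_measure_support:
  assumes "radon_measure P"
  shows "emeasure P (- measure_support P) = 0"
proof -
  have sets: "sets P = sets borel" using assms unfolding radon_measure_def by simp
  have null: "emeasure P Q = 0" if Q: "compact Q" "Q \<subseteq> - measure_support P" for Q
  proof -
    define N where "N = {U. open U \<and> emeasure P U = 0}"
    have "Q \<subseteq> \<Union>N"
    proof
      fix x assume "x \<in> Q"
      then have "x \<notin> measure_support P" using Q(2) by blast
      then show "x \<in> \<Union>N" unfolding measure_support_def N_def by (auto simp: not_gr_zero)
    qed
    then obtain F where F: "F \<subseteq> N" "finite F" "Q \<subseteq> (\<Union>U\<in>F. U)"
      by (rule compactE[OF Q(1)]) (auto simp: N_def)
    have F_sets: "(\<lambda>U. U) ` F \<subseteq> sets P"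
      using F(1) by (auto simp: N_def sets)
    then have "emeasure P Q \<le> emeasure P (\<Union>U\<in>F. U)"
      using F(2,3) by (intro emeasure_mono sets.finite_UN) auto
    also have "\<dots> \<le> (\<Sum>U\<in>F. emeasure P U)"
      using F(2) F_sets by (rule emeasure_subadditive_finite)
    also have "\<dots> = 0" using F(1) by (intro sum.neutral) (auto simp: N_def)
    finally show ?thesis by simp
  qed
  have "- measure_support P \<in> sets borel"
    using closed_measure_support[of P] unfolding closed_def by (rule borel_open)
  then have "emeasure P (- measure_support P)
      = (SUP Q\<in>{Q. compact Q \<and> Q \<subseteq> - measure_support P}. emeasure P Q)"
    using assms unfolding radon_measure_def by blast
  also have "\<dots> = (SUP Q\<in>{Q. compact Q \<and> Q \<subseteq> - measure_support P}. 0)"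
    using null by (intro SUP_cong) auto
  also have "\<dots> = 0" by (rule SUP_const) auto
  finally show ?thesis .
qed

section \<open>Distortion of a Radon probability measure with finite r-th moment\<close>

text \<open>For x \<in> C - {b}, r times this is the derivative at s = 0 of s \<mapsto> |x - (b + s u)|^r.\<close>
definition stationarity_integrand :: "real \<Rightarrow> 'a::real_inner set \<Rightarrow> 'a \<Rightarrow> 'a \<Rightarrow> 'a \<Rightarrow> real" where
  "stationarity_integrand r C b u x =
     indicator (C - {b}) x * norm (x - b) powr (r - 1) * (inner (b - x) u / norm (b - x))"

locale quantization = prob_space P
  for P :: "'a::{real_inner,complete_space} measure" +
  fixes r :: real
  assumes radon: "radon_measure P" and r_pos: "0 < r"
    and moment: "integrable P (\<lambda>x. norm x powr r)"
begin

lemma sets_P: "sets P = sets borel"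
  using radon unfolding radon_measure_def by simp

lemma space_P: "space P = UNIV"
  using sets_eq_imp_space_eq[OF sets_P] by simp

lemma borel_measurable_P: "f \<in> borel_measurable borel \<Longrightarrow> f \<in> borel_measurable P"
  using measurable_cong_sets[OF sets_P refl] by blast

lemma AE_measure_support: "AE x in P. x \<in> measure_support P"
proof (rule AE_I')
  show "- measure_support P \<in> null_sets P"
    using emeasure_compl_measure_support[OF radon] closed_measure_support[of P]
    unfolding closed_def null_sets_def by (simp add: sets_P borel_open)
qed auto

lemma integrable_norm_diff_powr: "integrable P (\<lambda>x. norm (x - y) powr r)"
proof (rule Bochner_Integration.integrable_bound)
  show "integrable P (\<lambda>x. 2 powr r * (norm x powr r + norm y powr r))"
    using moment by (intro integrable_mult_right Bochner_Integration.integrable_add integrable_const)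
  have "continuous_on UNIV (\<lambda>x. norm (x - y) powr r)"
    using r_pos by (intro continuous_on_powr' continuous_intros) auto
  then show "(\<lambda>x. norm (x - y) powr r) \<in> borel_measurable P"
    by (intro borel_measurable_P borel_measurable_continuous_onI)
  show "AE x in P. norm (norm (x - y) powr r) \<le> norm (2 powr r * (norm x powr r + norm y powr r))"
    using norm_diff_powr_le[of r] r_pos by auto
qed

lemma integrable_Min_norm_diff_powr:
  fixes b :: "nat \<Rightarrow> 'a"
  assumes "0 < n"
  shows "integrable P (\<lambda>x. MIN i\<in>{..<n}. norm (x - b i) powr r)"
proof (rule Bochner_Integration.integrable_bound[OF integrable_norm_diff_powr[of "b 0"]])
  show "(\<lambda>x. MIN i\<in>{..<n}. norm (x - b i) powr r) \<in> borel_measurable P"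
    by (rule borel_measurable_Min) (auto intro: borel_measurable_integrable integrable_norm_diff_powr)
  have "0 \<le> (MIN i\<in>{..<n}. norm (x - b i) powr r)" for x
    using assms by (subst Min_ge_iff) (auto simp: lessThan_empty_iff)
  moreover have "(MIN i\<in>{..<n}. norm (x - b i) powr r) \<le> norm (x - b 0) powr r" for x
    using assms by (intro Min_le) auto
  ultimately
  show "AE x in P. norm (MIN i\<in>{..<n}. norm (x - b i) powr r) \<le> norm (norm (x - b 0) powr r)"
    by auto
qed

definition cell_distortion :: "'a set \<Rightarrow> 'a \<Rightarrow> real" where
  "cell_distortion C y = (\<integral>x. indicator C x * norm (x - y) powr r \<partial>P)"

lemma integrable_indicator_norm_diff_powr:
  assumes "C \<in> sets borel"
  shows "integrable P (\<lambda>x. indicator C x * norm (x - y) powr r)"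
proof -
  have "integrable P (\<lambda>x. norm (x - y) powr r * indicator C x)"
    using assms sets_P by (intro integrable_real_mult_indicator integrable_norm_diff_powr) auto
  then show ?thesis by (simp add: mult.commute)
qed

lemma convex_on_cell_distortion:
  assumes "1 \<le> r" "C \<in> sets borel"
  shows "convex_on UNIV (cell_distortion C)"
proof (rule convex_onI)
  fix y z :: 'a and u :: real assume u: "0 < u" "u < 1"
  let ?f = "\<lambda>y x. indicator C x * norm (x - y) powr r"
  have "cell_distortion C ((1 - u) *\<^sub>R y + u *\<^sub>R z) \<le> (\<integral>x. (1 - u) * ?f y x + u * ?f z x \<partial>P)"
    unfolding cell_distortion_def
  proof (rule integral_mono)
    fix x
    show "?f ((1 - u) *\<^sub>R y + u *\<^sub>R z) x \<le> (1 - u) * ?f y x + u * ?f z x"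
      using convex_onD[OF convex_on_norm_diff_powr[OF assms(1), of x], of u y z] u
      by (cases "x \<in> C") auto
  qed (use integrable_indicator_norm_diff_powr[OF assms(2)] in auto)
  also have "\<dots> = (1 - u) * cell_distortion C y + u * cell_distortion C z"
    unfolding cell_distortion_def using integrable_indicator_norm_diff_powr[OF assms(2)] by simp
  finally show "cell_distortion C ((1 - u) *\<^sub>R y + u *\<^sub>R z)
      \<le> (1 - u) * cell_distortion C y + u * cell_distortion C z" .
qed simp

lemma borel_measurable_stationarity_integrand:
  assumes "C \<in> sets borel"
  shows "stationarity_integrand r C c u \<in> borel_measurable P"
proof -
  have "(\<lambda>x. norm (x - c)) \<in> borel_measurable P" "(\<lambda>x. inner (c - x) u) \<in> borel_measurable P"
    "(\<lambda>x. norm (c - x)) \<in> borel_measurable P"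
    by (intro borel_measurable_P borel_measurable_continuous_onI continuous_intros)+
  moreover have "indicator (C - {c}) \<in> borel_measurable P"
    using assms sets_P by (intro borel_measurable_indicator) auto
  ultimately show ?thesis
    unfolding stationarity_integrand_def
    by (intro borel_measurable_times borel_measurable_divide powr_real_measurable borel_measurable_const)
qed

text \<open>Dominated convergence, with the dominating function supplied by the monotonicity of
  difference quotients of the convex function s \<mapsto> |x - (c + s u)|^r.\<close>
lemma cell_distortion_directional_derivative:
  assumes "1 \<le> r" "C \<in> sets borel" "r = 1 \<longrightarrow> emeasure P {c} = 0"
  shows "integrable P (stationarity_integrand r C c u)"
    and "(\<lambda>k. (cell_distortion C (c + inverse (real (Suc k)) *\<^sub>R u) - cell_distortion C c)
              / inverse (real (Suc k)))
           \<longlonglongrightarrow> r * (\<integral>x. stationarity_integrand r C c u x \<partial>P)"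
proof -
  define t where "t k = inverse (real (Suc k))" for k
  define h where "h x s = norm (x - (c + s *\<^sub>R u)) powr r" for x s
  define q where "q k x = (indicator C x * h x (t k) - indicator C x * h x 0) / t k" for k x
  define w where "w x = \<bar>h x 1 - h x 0\<bar> + \<bar>h x 0 - h x (-1)\<bar>" for x
  define \<phi> where "\<phi> = stationarity_integrand r C c u"
  have t: "0 < t k" "t k \<le> 1" for k unfolding t_def by (auto simp: field_simps)
  have int_Ch: "integrable P (\<lambda>x. indicator C x * h x s)" for s
    unfolding h_def by (rule integrable_indicator_norm_diff_powr[OF assms(2)])
  have int_q: "integrable P (q k)" for k
    unfolding q_def using int_Ch by simp
  have int_q_eq: "(\<integral>x. q k x \<partial>P) = (cell_distortion C (c + t k *\<^sub>R u) - cell_distortion C c) / t k" for k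
    using int_Ch[of "t k"] int_Ch[of 0] unfolding q_def cell_distortion_def h_def
    by (simp add: integral_diff)
  have bound: "norm (q k x) \<le> w x" for k x
    using convex_on_difference_quotient_bounds[OF convex_on_norm_diff_powr_line[OF assms(1), of x c u] t[of k]]
    by (cases "x \<in> C") (auto simp: q_def w_def h_def)
  have "AE x in P. x \<noteq> c \<or> 1 < r"
    using assms(1,3) by (cases "r = 1") (auto intro!: AE_I'[of "{c}"] simp: null_sets_def sets_P)
  then have lim: "AE x in P. (\<lambda>k. q k x) \<longlonglongrightarrow> r * \<phi> x"
  proof eventually_elim
    case (elim x)
    show ?case
    proof (cases "x \<in> C")
      case True
      then show ?thesis
        using norm_diff_powr_difference_quotients_LIMSEQ[OF elim, of u]
        by (cases "x = c") (simp_all add: q_def h_def t_def \<phi>_def stationarity_integrand_def)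
    qed (simp add: q_def \<phi>_def stationarity_integrand_def)
  qed
  have meas: "(\<lambda>x. r * \<phi> x) \<in> borel_measurable P" "\<And>k. q k \<in> borel_measurable P"
    using borel_measurable_stationarity_integrand[OF assms(2)] int_q unfolding \<phi>_def by auto
  have int_w: "integrable P w" unfolding w_def h_def using integrable_norm_diff_powr by simp
  have "integrable P (\<lambda>x. r * \<phi> x)"
    using integrable_dominated_convergence[OF meas int_w lim] bound by simp
  then show "integrable P (stationarity_integrand r C c u)" using r_pos by (simp add: \<phi>_def)
  have "(\<lambda>k. \<integral>x. q k x \<partial>P) \<longlonglongrightarrow> (\<integral>x. r * \<phi> x \<partial>P)"
    using integral_dominated_convergence[OF meas int_w lim] bound by simp
  then show "(\<lambda>k. (cell_distortion C (c + inverse (real (Suc k)) *\<^sub>R u) - cell_distortion C c)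
              / inverse (real (Suc k)))
           \<longlonglongrightarrow> r * (\<integral>x. stationarity_integrand r C c u x \<partial>P)"
    by (simp add: int_q_eq \<phi>_def t_def)
qed

lemma cell_distortion_minimizer_stationary:
  assumes "1 \<le> r" "C \<in> sets borel" "r = 1 \<longrightarrow> emeasure P {c} = 0"
    and min: "\<And>y. cell_distortion C c \<le> cell_distortion C y"
  shows "integrable P (stationarity_integrand r C c u)"
    and "(\<integral>x. stationarity_integrand r C c u x \<partial>P) = 0"
proof -
  have nonneg: "0 \<le> (\<integral>x. stationarity_integrand r C c v x \<partial>P)" for v
  proof -
    have "0 \<le> r * (\<integral>x. stationarity_integrand r C c v x \<partial>P)"
      by (rule LIMSEQ_le_const[OF cell_distortion_directional_derivative(2)[OF assms(1-3)]])
        (use min in \<open>auto intro!: divide_nonneg_pos\<close>)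
    then show ?thesis using r_pos by (simp add: zero_le_mult_iff)
  qed
  have "stationarity_integrand r C c (- u) = (\<lambda>x. - stationarity_integrand r C c u x)"
    by (simp add: fun_eq_iff stationarity_integrand_def)
  then show "(\<integral>x. stationarity_integrand r C c u x \<partial>P) = 0"
    using nonneg[of u] nonneg[of "- u"] by simp
  show "integrable P (stationarity_integrand r C c u)"
    by (rule cell_distortion_directional_derivative(1)[OF assms(1-3)])
qed

lemma distortion_uniform_measure_1:
  assumes "C \<in> sets borel" "0 < emeasure P C"
  shows "distortion (uniform_measure P C) r 1 (\<lambda>_. y) = cell_distortion C y / measure P C"
proof -
  have m: "0 < measure P C" using assms(2) by (simp add: emeasure_eq_measure)
  have "1 / ennreal (measure P C) = ennreal (1 / measure P C)"
    using m by (metis divide_ennreal ennreal_1 zero_le_one)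
  then have "uniform_measure P C = density P (\<lambda>x. ennreal (indicator C x / measure P C))"
    unfolding uniform_measure_def
    by (intro arg_cong[where f = "density P"]) (auto simp: fun_eq_iff emeasure_eq_measure indicator_def)
  moreover have "(\<lambda>x. indicator C x / measure P C) \<in> borel_measurable P"
    using assms(1) sets_P by (intro borel_measurable_divide borel_measurable_indicator borel_measurable_const) auto
  moreover have "(\<lambda>x. norm (x - y) powr r) \<in> borel_measurable P"
    using integrable_norm_diff_powr by (rule borel_measurable_integrable)
  ultimately have "(\<integral>x. norm (x - y) powr r \<partial>uniform_measure P C)
      = (\<integral>x. indicator C x * norm (x - y) powr r / measure P C \<partial>P)"
    using m by (simp add: integral_density)
  then show ?thesis
    unfolding distortion_def cell_distortion_def by (simp add: lessThan_Suc)
qed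

lemma measure_support_nonempty: "measure_support P \<noteq> {}"
proof
  assume "measure_support P = {}"
  then have "emeasure P UNIV = 0" using emeasure_compl_measure_support[OF radon] by simp
  then show False using emeasure_space_1 space_P by simp
qed

lemma distortion_le_if_dominated:
  fixes a b :: "nat \<Rightarrow> 'a"
  assumes "0 < n" "AE x in P. \<forall>j<n. \<exists>k<n. norm (x - b k) \<le> norm (x - a j)"
  shows "distortion P r n b \<le> distortion P r n a"
  unfolding distortion_def
proof (rule integral_mono_AE[OF integrable_Min_norm_diff_powr integrable_Min_norm_diff_powr])
  show "AE x in P. (MIN j\<in>{..<n}. norm (x - b j) powr r) \<le> (MIN j\<in>{..<n}. norm (x - a j) powr r)"
    using assms(2)
  proof eventually_elim
    case (elim x)
    have "\<exists>k\<in>{..<n}. norm (x - b k) powr r \<le> norm (x - a j) powr r" if j: "j < n" for j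
    proof -
      obtain k where "k < n" "norm (x - b k) \<le> norm (x - a j)" using elim j by blast
      then show ?thesis using r_pos by (intro bexI[of _ k] powr_mono2) auto
    qed
    then show ?case using assms(1) by (intro Min_le_Min_if_dominated) auto
  qed
qed (use assms(1) in auto)

lemma emeasure_eq_0_if_integral_eq_0:
  fixes f :: "'a \<Rightarrow> real"
  assumes "integrable P f" "AE x in P. 0 \<le> f x" "(\<integral>x. f x \<partial>P) = 0"
    and "S \<in> sets borel" "\<And>x. x \<in> S \<Longrightarrow> 0 < f x"
  shows "emeasure P S = 0"
proof -
  have "AE x in P. f x = 0" using integral_nonneg_eq_0_iff_AE[OF assms(1,2)] assms(3) by simp
  then have "AE x in P. x \<notin> S" by eventually_elim (use assms(5) in force)
  then show ?thesis using AE_iff_measurable[of S P "\<lambda>x. x \<notin> S"] assms(4) by (simp add: sets_P space_P)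
qed

end

section \<open>Strict local minimizers of the distortion\<close>

locale quantizer_strict_local_min = quantization +
  fixes n :: nat and a :: "nat \<Rightarrow> 'a"
  assumes n_pos: "1 \<le> n" and convex_support: "convex (measure_support P)"
    and strict_min: "strict_local_min n (distortion P r n) a"
begin

abbreviation "K \<equiv> measure_support P"
abbreviation "\<Gamma> \<equiv> a ` {..<n}"

lemma strict_local_min_update:
  assumes "i < n"
  obtains e where "0 < e"
    "\<And>y. dist y (a i) < e \<Longrightarrow> y \<noteq> a i \<Longrightarrow> distortion P r n a < distortion P r n (a(i := y))"
proof -
  obtain e where "0 < e" and e: "\<And>b. (\<forall>j<n. dist (b j) (a j) < e) \<Longrightarrow> (\<exists>j<n. b j \<noteq> a j)
      \<Longrightarrow> distortion P r n a < distortion P r n b"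
    using strict_min unfolding strict_local_min_def by blast
  have "distortion P r n a < distortion P r n (a(i := y))" if "dist y (a i) < e" "y \<noteq> a i" for y
    using that \<open>0 < e\<close> assms by (intro e) auto
  then show ?thesis using that \<open>0 < e\<close> by blast
qed

text \<open>Otherwise moving a i slightly towards its projection onto the closed convex support
  brings it closer to every point of the support.\<close>
lemma centers_in_support:
  assumes "i < n"
  shows "a i \<in> K"
proof (rule ccontr)
  assume "a i \<notin> K"
  obtain p where "p \<in> K" and p: "\<And>x. x \<in> K \<Longrightarrow> inner (a i - p) (x - p) \<le> 0"
    using closed_convex_projection_exists[OF closed_measure_support convex_support measure_support_nonempty]
    by metis
  have "0 < norm (p - a i)" using \<open>p \<in> K\<close> \<open>a i \<notin> K\<close> by auto
  obtain e where "0 < e" and e: "\<And>y. dist y (a i) < e \<Longrightarrow> y \<noteq> a i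
      \<Longrightarrow> distortion P r n a < distortion P r n (a(i := y))"
    using strict_local_min_update[OF assms] by blast
  define t where "t = min 1 (e / (2 * norm (p - a i)))"
  have t: "0 < t" "t \<le> 1" using \<open>0 < e\<close> \<open>0 < norm (p - a i)\<close> by (auto simp: t_def)
  define y where "y = a i + t *\<^sub>R (p - a i)"
  have "dist y (a i) = t * norm (p - a i)" using t by (simp add: y_def dist_norm)
  also have "\<dots> \<le> e / (2 * norm (p - a i)) * norm (p - a i)"
    by (intro mult_right_mono) (auto simp: t_def)
  also have "\<dots> = e / 2" using \<open>0 < norm (p - a i)\<close> by simp
  finally have "dist y (a i) \<le> e / 2" .
  moreover have "y \<noteq> a i" using t \<open>0 < norm (p - a i)\<close> by (simp add: y_def)
  ultimately have "distortion P r n a < distortion P r n (a(i := y))" using \<open>0 < e\<close> by (intro e) auto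
  moreover have "distortion P r n (a(i := y)) \<le> distortion P r n a"
  proof (rule distortion_le_if_dominated)
    show "AE x in P. \<forall>j<n. \<exists>k<n. norm (x - (a(i := y)) k) \<le> norm (x - a j)"
      using AE_measure_support
    proof eventually_elim
      case (elim x)
      have "norm (x - (a(i := y)) j) \<le> norm (x - a j)" for j
        using norm_diff_le_toward_projection[OF p[OF elim] less_imp_le[OF t(1)] t(2)]
        by (simp add: y_def)
      then show ?case by blast
    qed
  qed (use n_pos in simp)
  ultimately show False by simp
qed

lemma inj_on_centers:
  assumes "(v::'a) \<noteq> 0"
  shows "inj_on a {..<n}"
proof (rule inj_onI, rule ccontr)
  fix i j assume ij: "i \<in> {..<n}" "j \<in> {..<n}" "a i = a j" "i \<noteq> j"
  obtain e where "0 < e" and e: "\<And>y. dist y (a j) < e \<Longrightarrow> y \<noteq> a j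
      \<Longrightarrow> distortion P r n a < distortion P r n (a(j := y))"
    using strict_local_min_update[of j] ij by blast
  define y where "y = a j + (e / (2 * norm v)) *\<^sub>R v"
  have "dist y (a j) < e" "y \<noteq> a j" using assms \<open>0 < e\<close> by (auto simp: y_def dist_norm)
  then have "distortion P r n a < distortion P r n (a(j := y))" by (rule e)
  moreover have "distortion P r n (a(j := y)) \<le> distortion P r n a"
  proof (rule distortion_le_if_dominated)
    have "\<exists>k<n. norm (x - (a(j := y)) k) \<le> norm (x - a l)" if "l < n" for x l
    proof (cases "l = j")
      case True
      then show ?thesis using ij by (intro exI[of _ i]) auto
    next
      case False
      then show ?thesis using that by (intro exI[of _ l]) auto
    qed
    then show "AE x in P. \<forall>l<n. \<exists>k<n. norm (x - (a(j := y)) k) \<le> norm (x - a l)" by simp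
  qed (use n_pos in simp)
  ultimately show False by simp
qed

lemma emeasure_voronoi_W_pos:
  assumes "i < n"
  shows "0 < emeasure P (voronoi_W (a i) \<Gamma>)"
proof -
  obtain d where "0 < d" "ball (a i) d \<subseteq> voronoi_W (a i) \<Gamma>"
    using ball_subset_voronoi_W[of \<Gamma> "a i"] by auto
  have "0 < emeasure P (ball (a i) d)"
    using centers_in_support[OF assms] \<open>0 < d\<close> by (intro measure_supportD) auto
  also have "\<dots> \<le> emeasure P (voronoi_W (a i) \<Gamma>)"
    using \<open>ball (a i) d \<subseteq> voronoi_W (a i) \<Gamma>\<close>
    by (intro emeasure_mono) (auto simp: sets_P intro: borel_open open_voronoi_W)
  finally show ?thesis .
qed

lemma distortion_update_le:
  assumes "i < n" "C \<in> sets borel" "voronoi_W (a i) \<Gamma> \<subseteq> C" "C \<subseteq> voronoi_V (a i) \<Gamma>"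
  shows "distortion P r n (a(i := y))
    \<le> cell_distortion C y + distortion P r n a - cell_distortion C (a i)"
proof -
  define m where "m b x = (MIN j\<in>{..<n}. norm (x - b j) powr r)" for b :: "nat \<Rightarrow> 'a" and x
  have "0 < n" using n_pos by simp
  have pointwise: "m (a(i := y)) x \<le> indicator C x * norm (x - y) powr r + (m a x - indicator C x * m a x)" for x
  proof (cases "x \<in> C")
    case True
    have "m (a(i := y)) x \<le> norm (x - (a(i := y)) i) powr r"
      unfolding m_def using assms(1) by (intro Min_le) auto
    then show ?thesis using True by simp
  next
    case False
    then have "x \<notin> voronoi_W (a i) \<Gamma>" using assms(3) by auto
    then have "m (a(i := y)) x \<le> m a x"
      unfolding m_def by (rule Min_norm_diff_powr_update_le[OF less_imp_le[OF r_pos] assms(1)])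
    then show ?thesis using False by simp
  qed
  have int_m: "integrable P (m b)" for b
    unfolding m_def using \<open>0 < n\<close> by (rule integrable_Min_norm_diff_powr)
  have int_Cm: "integrable P (\<lambda>x. indicator C x * m a x)"
    using integrable_real_mult_indicator[OF _ int_m, of C] assms(2) sets_P by (simp add: mult.commute)
  have Cm: "indicator C x * m a x = indicator C x * norm (x - a i) powr r" for x
    using Min_norm_diff_powr_on_voronoi_V[of r i n x a] assms(1,4) r_pos
    by (cases "x \<in> C") (auto simp: m_def)
  have "(\<integral>x. m (a(i := y)) x \<partial>P)
      \<le> (\<integral>x. indicator C x * norm (x - y) powr r + (m a x - indicator C x * m a x) \<partial>P)"
    using pointwise int_m int_Cm integrable_indicator_norm_diff_powr[OF assms(2)]
    by (intro integral_mono) auto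
  also have "\<dots> = cell_distortion C y + distortion P r n a - cell_distortion C (a i)"
    using int_m int_Cm integrable_indicator_norm_diff_powr[OF assms(2)]
    by (simp add: cell_distortion_def distortion_def m_def[symmetric] Cm integral_diff)
  finally show ?thesis unfolding distortion_def m_def .
qed

text \<open>Local minimality of the configuration makes a i a local, hence by convexity a global,
  minimizer of the cell distortion.\<close>
lemma cell_distortion_min_at_center:
  assumes "1 \<le> r" "i < n" "C \<in> sets borel" "voronoi_W (a i) \<Gamma> \<subseteq> C" "C \<subseteq> voronoi_V (a i) \<Gamma>"
  shows "cell_distortion C (a i) \<le> cell_distortion C y"
proof -
  obtain e where "0 < e" and e: "\<And>y. dist y (a i) < e \<Longrightarrow> y \<noteq> a i
      \<Longrightarrow> distortion P r n a < distortion P r n (a(i := y))"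
    using strict_local_min_update[OF assms(2)] by blast
  have "cell_distortion C (a i) \<le> cell_distortion C y" if "y \<in> ball (a i) e" for y
  proof (cases "y = a i")
    case False
    then show ?thesis
      using e[of y] that distortion_update_le[OF assms(2-5), of y] by (simp add: dist_commute)
  qed simp
  then show ?thesis
    using convex_local_global_minimum[OF \<open>0 < e\<close> convex_on_cell_distortion[OF assms(1,3)]] by blast
qed

lemma emeasure_cell_pos:
  assumes "i < n" "C \<in> sets borel" "voronoi_W (a i) \<Gamma> \<subseteq> C"
  shows "0 < emeasure P C"
  using emeasure_voronoi_W_pos[OF assms(1)] emeasure_mono[OF assms(3)] assms(2) sets_P
  by (metis order_less_le_trans)

lemma center_minimizes_cell_distortion:
  assumes "1 \<le> r" "i < n" "C \<in> sets borel" "voronoi_W (a i) \<Gamma> \<subseteq> C" "C \<subseteq> voronoi_V (a i) \<Gamma>"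
  shows "distortion (uniform_measure P C) r 1 (\<lambda>_. a i) \<le> distortion (uniform_measure P C) r 1 (\<lambda>_. y)"
proof -
  have pos: "0 < emeasure P C" by (rule emeasure_cell_pos[OF assms(2-4)])
  then have "0 < measure P C" by (simp add: emeasure_eq_measure)
  then show ?thesis
    unfolding distortion_uniform_measure_1[OF assms(3) pos]
    using cell_distortion_min_at_center[OF assms] by (intro divide_right_mono) auto
qed

lemma center_stationary_in_cell:
  assumes "1 \<le> r" "r = 1 \<longrightarrow> (\<forall>i<n. emeasure P {a i} = 0)"
    and "i < n" "C \<in> sets borel" "voronoi_W (a i) \<Gamma> \<subseteq> C" "C \<subseteq> voronoi_V (a i) \<Gamma>"
  shows "integrable P (stationarity_integrand r C (a i) u)"
    and "(\<integral>x. stationarity_integrand r C (a i) u x \<partial>P) = 0"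
proof -
  have atom: "r = 1 \<longrightarrow> emeasure P {a i} = 0" using assms(2,3) by blast
  note min = cell_distortion_min_at_center[OF assms(1,3-6)]
  show "integrable P (stationarity_integrand r C (a i) u)"
    by (rule cell_distortion_minimizer_stationary(1)[OF assms(1,4) atom min])
  show "(\<integral>x. stationarity_integrand r C (a i) u x \<partial>P) = 0"
    by (rule cell_distortion_minimizer_stationary(2)[OF assms(1,4) atom min])
qed

text \<open>Stationarity on W and on W \<union> D forces the integral of the directional derivative towards
  a k over D to vanish, while the integrand is negative on D since every point of D is
  equidistant from a i and a k.\<close>
lemma emeasure_voronoi_tie_eq_0:
  assumes "1 \<le> r" "r = 1 \<longrightarrow> (\<forall>i<n. emeasure P {a i} = 0)"
    and "i < n" "k < n" "a k \<noteq> a i"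
  shows "emeasure P (voronoi_V (a i) \<Gamma> \<inter> voronoi_V (a k) \<Gamma> - voronoi_W (a i) \<Gamma>) = 0"
proof -
  define W where "W = voronoi_W (a i) \<Gamma>"
  define D where "D = voronoi_V (a i) \<Gamma> \<inter> voronoi_V (a k) \<Gamma> - W"
  define u where "u = a k - a i"
  define \<psi> where "\<psi> x = norm (x - a i) powr (r - 1) * (inner (a i - x) u / norm (a i - x))" for x
  have W: "W \<in> sets borel" "W \<subseteq> voronoi_V (a i) \<Gamma>" "a i \<in> W"
    unfolding W_def
    by (intro borel_open open_voronoi_W finite_imageI finite_lessThan, rule voronoi_W_subset_V)
      (auto simp: voronoi_W_def)
  have D: "D \<in> sets borel" "D \<subseteq> voronoi_V (a i) \<Gamma>"
    using W(1) unfolding D_def by (auto intro: borel_closed closed_voronoi_V)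
  have split: "stationarity_integrand r (W \<union> D) (a i) u x
      = stationarity_integrand r W (a i) u x + indicator D x * \<psi> x" for x
    using W(3) by (cases "x \<in> W"; cases "x \<in> D") (auto simp: stationarity_integrand_def \<psi>_def D_def)
  have int_WD: "integrable P (stationarity_integrand r (W \<union> D) (a i) u)"
    and zero_WD: "(\<integral>x. stationarity_integrand r (W \<union> D) (a i) u x \<partial>P) = 0"
    using center_stationary_in_cell[OF assms(1-3), of "W \<union> D" u] W D by (auto simp: W_def)
  have int_W: "integrable P (stationarity_integrand r W (a i) u)"
    and zero_W: "(\<integral>x. stationarity_integrand r W (a i) u x \<partial>P) = 0"
    using center_stationary_in_cell[OF assms(1-3), of W u] W by (auto simp: W_def)
  have "integrable P (\<lambda>x. stationarity_integrand r (W \<union> D) (a i) u x - stationarity_integrand r W (a i) u x)"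
    using int_WD int_W by (rule Bochner_Integration.integrable_diff)
  then have int_D: "integrable P (\<lambda>x. indicator D x * \<psi> x)" by (simp add: split)
  have "(\<integral>x. stationarity_integrand r (W \<union> D) (a i) u x \<partial>P)
      = (\<integral>x. stationarity_integrand r W (a i) u x \<partial>P) + (\<integral>x. indicator D x * \<psi> x \<partial>P)"
    unfolding split using int_W int_D by (rule Bochner_Integration.integral_add)
  then have zero_D: "(\<integral>x. indicator D x * \<psi> x \<partial>P) = 0" using zero_WD zero_W by simp
  have neg: "\<psi> x < 0" if "x \<in> D" for x
  proof -
    have "x \<noteq> a i" using that W(3) by (auto simp: D_def)
    moreover have "inner (a i - x) u < 0"
      using that assms(3-5) unfolding u_def D_def by (intro inner_neg_on_voronoi_tie) auto
    ultimately show ?thesis by (simp add: \<psi>_def mult_pos_neg divide_neg_pos)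
  qed
  have "emeasure P D = 0"
  proof (rule emeasure_eq_0_if_integral_eq_0)
    show "integrable P (\<lambda>x. - (indicator D x * \<psi> x))" using int_D by simp
    show "AE x in P. 0 \<le> - (indicator D x * \<psi> x)"
      using neg by (intro AE_I2) (auto simp: indicator_def less_imp_le)
    show "(\<integral>x. - (indicator D x * \<psi> x) \<partial>P) = 0" using zero_D by simp
    show "0 < - (indicator D x * \<psi> x)" if "x \<in> D" for x using neg[OF that] that by simp
  qed (rule D(1))
  then show ?thesis by (simp add: D_def W_def)
qed

lemma admissible_centers:
  assumes "1 \<le> r" "r = 1 \<longrightarrow> (\<forall>i<n. emeasure P {a i} = 0)"
  shows "admissible P \<Gamma>"
proof -
  define D where "D i k = voronoi_V (a i) \<Gamma> \<inter> voronoi_V (a k) \<Gamma> - voronoi_W (a i) \<Gamma>" for i k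
  have null: "AE x in P. a k \<noteq> a i \<longrightarrow> x \<notin> D i k" if "i < n" "k < n" for i k
  proof (cases "a k = a i")
    case False
    have "D i k \<in> sets P"
      unfolding D_def sets_P
      by (intro sets.Diff sets.Int borel_closed closed_voronoi_V borel_open open_voronoi_W finite_imageI finite_lessThan)
    moreover have "emeasure P (D i k) = 0"
      using emeasure_voronoi_tie_eq_0[OF assms that(1,2) False] by (simp add: D_def)
    ultimately have "D i k \<in> null_sets P" by (intro null_setsI)
    then show ?thesis by (rule AE_I') auto
  qed simp
  have "AE x in P. \<forall>i\<in>{..<n}. \<forall>k\<in>{..<n}. a k \<noteq> a i \<longrightarrow> x \<notin> D i k"
    by (intro AE_finite_allI finite_lessThan null) auto
  then have "AE x in P. x \<in> (\<Union>b\<in>\<Gamma>. voronoi_W b \<Gamma>)"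
  proof eventually_elim
    case (elim x)
    have "0 < n" using n_pos by simp
    then obtain i where i: "i < n" "x \<in> voronoi_V (a i) \<Gamma>" using voronoi_V_cover by blast
    show ?case
    proof (rule ccontr)
      assume "x \<notin> (\<Union>b\<in>\<Gamma>. voronoi_W b \<Gamma>)"
      then have "x \<notin> voronoi_W (a i) \<Gamma>" using i(1) by blast
      then obtain k where k: "k < n" "a k \<noteq> a i" "norm (x - a k) \<le> norm (x - a i)"
        unfolding voronoi_W_def by (auto simp: not_less)
      then have "x \<in> voronoi_V (a k) \<Gamma>"
        using i(2) unfolding voronoi_V_def by (blast intro: order_trans)
      then have "x \<in> D i k" using i(2) \<open>x \<notin> voronoi_W (a i) \<Gamma>\<close> by (simp add: D_def)
      then show False using elim i(1) k(1,2) by blast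
    qed
  qed
  moreover have "(\<Union>b\<in>\<Gamma>. voronoi_W b \<Gamma>) \<in> sets P"
    unfolding sets_P by (intro borel_open open_UN ballI open_voronoi_W finite_imageI finite_lessThan)
  ultimately show ?thesis unfolding admissible_def by (intro emeasure_eq_1_AE)
qed

lemma stationary_centers:
  assumes "1 \<le> r" "r = 1 \<longrightarrow> (\<forall>i<n. emeasure P {a i} = 0)" "inj_on a {..<n}"
  shows "stationary_quantizer P r n \<Gamma>"
proof -
  obtain C where C: "voronoi_partition C \<Gamma>" "\<And>i. i < n \<Longrightarrow> voronoi_W (a i) \<Gamma> \<subseteq> C (a i)"
    using voronoi_partition_exists n_pos by (metis less_le_trans zero_less_one)
  have C_cell: "C (a i) \<in> sets borel" "C (a i) \<subseteq> voronoi_V (a i) \<Gamma>" if "i < n" for i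
    using C(1) that unfolding voronoi_partition_def by auto
  have "emeasure P \<Gamma> = 0" if "r = 1"
    using assms(2) that by (subst emeasure_eq_sum_singleton) (auto simp: sets_P)
  moreover have "0 < emeasure P (C b) \<and>
      (\<forall>u. integrable P (stationarity_integrand r (C b) b u) \<and>
           (\<integral>x. stationarity_integrand r (C b) b u x \<partial>P) = 0)" if "b \<in> \<Gamma>" for b
    using that emeasure_cell_pos[OF _ C_cell(1) C(2)]
      center_stationary_in_cell[OF assms(1,2) _ C_cell(1) C(2) C_cell(2)] by auto
  ultimately show ?thesis
    using C(1) assms(3)
    unfolding stationary_quantizer_def stationarity_integrand_def by (auto simp: card_image)
qed

text \<open>At a boundary point a i the directional derivative towards the interior along a
  supporting normal is nonnegative on the support and positive on an open piece of the interior
  of K inside the Voronoi cell, which has positive mass; so it cannot integrate to 0.\<close>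
lemma centers_in_interior:
  assumes "1 \<le> r" "r = 1 \<longrightarrow> (\<forall>i<n. emeasure P {a i} = 0)" "interior K \<noteq> {}" "i < n"
  shows "a i \<in> interior K"
proof (rule ccontr)
  assume "a i \<notin> interior K"
  obtain c where "c \<in> interior K" using assms(3) by blast
  obtain \<nu> where "\<nu> \<noteq> 0" and \<nu>: "\<And>x. x \<in> K \<Longrightarrow> inner (x - a i) \<nu> \<le> 0"
    using supporting_hyperplane_non_interior[OF convex_support \<open>a i \<notin> interior K\<close> \<open>c \<in> interior K\<close>] by blast
  define V where "V = voronoi_V (a i) \<Gamma>"
  define \<phi> where "\<phi> = stationarity_integrand r V (a i) \<nu>"
  have V: "V \<in> sets borel" "voronoi_W (a i) \<Gamma> \<subseteq> V" "V \<subseteq> voronoi_V (a i) \<Gamma>"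
    unfolding V_def by (auto intro: borel_closed closed_voronoi_V simp: voronoi_W_subset_V)
  note stat = center_stationary_in_cell[OF assms(1,2,4) V, of \<nu>, folded \<phi>_def]
  obtain \<delta> where "0 < \<delta>" and \<delta>: "ball (a i) \<delta> \<subseteq> voronoi_W (a i) \<Gamma>"
    using ball_subset_voronoi_W[of \<Gamma> "a i"] by auto
  define U where "U = interior K \<inter> ball (a i) \<delta>"
  have pos: "0 < \<phi> y" if "y \<in> U" for y
  proof -
    have "inner (y - a i) \<nu> < 0"
      using inner_lt_zero_on_interior[of y K \<nu>] that \<open>\<nu> \<noteq> 0\<close> \<nu> by (auto simp: U_def)
    then have "0 < inner (a i - y) \<nu>" by (simp add: inner_diff_left)
    moreover have "y \<in> V" "y \<noteq> a i" using that \<delta> V(2) calculation by (auto simp: U_def)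
    ultimately show ?thesis
      by (auto simp: \<phi>_def stationarity_integrand_def intro!: mult_pos_pos divide_pos_pos)
  qed
  have "emeasure P U = 0"
  proof (rule emeasure_eq_0_if_integral_eq_0[OF stat(1) _ stat(2)])
    show "AE x in P. 0 \<le> \<phi> x"
      using AE_measure_support
      by eventually_elim (use \<nu> in \<open>auto simp: \<phi>_def stationarity_integrand_def inner_diff_left\<close>)
  qed (use pos in \<open>auto simp: U_def\<close>)
  moreover have "0 < emeasure P U"
  proof -
    obtain m where "m \<in> interior K" "dist (a i) m < \<delta>"
      using interior_convex_meets_ball[OF convex_support centers_in_support[OF assms(4)]
          \<open>c \<in> interior K\<close> \<open>0 < \<delta>\<close>] .
    then show ?thesis
      using interior_subset[of K] by (intro measure_supportD[of m]) (auto simp: U_def)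
  qed
  ultimately show False by simp
qed

end

theorem theorem2p2:
  fixes P :: "'a::{real_inner, complete_space} measure"
    and r :: real and n :: nat and a :: "nat \<Rightarrow> 'a"
  assumes prob: "prob_space P"
    and radon: "radon_measure P"
    and r_pos: "0 < r"
    and moment: "integrable P (\<lambda>x. norm x powr r)"
    and n_pos: "1 \<le> n"
    and K_convex: "convex (measure_support P)"
    and strict_min: "strict_local_min n (distortion P r n) a"
  shows "(\<forall>i<n. a i \<in> measure_support P)
    \<and> ((\<forall>i<n. a i islimpt measure_support P) \<longrightarrow>
         inj_on a {..<n}
       \<and> (1 \<le> r \<longrightarrow> (\<forall>i<n. \<forall>C\<in>sets borel.
              voronoi_W (a i) (a ` {..<n}) \<subseteq> C \<and> C \<subseteq> voronoi_V (a i) (a ` {..<n}) \<longrightarrow>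
              (\<forall>y. distortion (uniform_measure P C) r 1 (\<lambda>_. a i)
                     \<le> distortion (uniform_measure P C) r 1 (\<lambda>_. y))))
       \<and> (1 \<le> r \<and> (r = 1 \<longrightarrow> (\<forall>i<n. emeasure P {a i} = 0)) \<longrightarrow>
              stationary_quantizer P r n (a ` {..<n}) \<and> admissible P (a ` {..<n})))
    \<and> (2 \<le> r \<and> (2 < r \<longrightarrow> (\<forall>i<n. emeasure P {a i} = 0))
         \<and> interior (measure_support P) \<noteq> {} \<longrightarrow>
         (\<forall>i<n. a i \<in> interior (measure_support P)))"
proof -
  interpret quantizer_strict_local_min P r n a
    using prob radon r_pos moment n_pos K_convex strict_min
    by (intro quantizer_strict_local_min.intro quantization.intro quantization_axioms.intro
        quantizer_strict_local_min_axioms.intro)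
  have inj: "inj_on a {..<n}" if "\<forall>i<n. a i islimpt K"
  proof -
    have "a 0 islimpt K" using that n_pos by simp
    then obtain x where "x \<in> K" "x \<noteq> a 0" unfolding islimpt_def by blast
    then show ?thesis using inj_on_centers[of "x - a 0"] by simp
  qed
  show ?thesis
  proof (intro conjI impI allI ballI)
    show "a i \<in> K" if "i < n" for i
      using that by (rule centers_in_support)
    show "inj_on a {..<n}" if "\<forall>i<n. a i islimpt K"
      using that by (rule inj)
    show "distortion (uniform_measure P C) r 1 (\<lambda>_. a i) \<le> distortion (uniform_measure P C) r 1 (\<lambda>_. y)"
      if "1 \<le> r" "i < n" "C \<in> sets borel" "voronoi_W (a i) \<Gamma> \<subseteq> C \<and> C \<subseteq> voronoi_V (a i) \<Gamma>"
      for i C y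
      using that center_minimizes_cell_distortion by blast
    show "stationary_quantizer P r n \<Gamma>"
      if "\<forall>i<n. a i islimpt K" "1 \<le> r \<and> (r = 1 \<longrightarrow> (\<forall>i<n. emeasure P {a i} = 0))"
      using that stationary_centers inj by blast
    show "admissible P \<Gamma>" if "1 \<le> r \<and> (r = 1 \<longrightarrow> (\<forall>i<n. emeasure P {a i} = 0))"
      using that admissible_centers by blast
    text \<open>The hypothesis that the centres carry no mass when r > 2 is not needed.\<close>
    show "a i \<in> interior K"
      if "2 \<le> r \<and> (2 < r \<longrightarrow> (\<forall>i<n. emeasure P {a i} = 0)) \<and> interior K \<noteq> {}" "i < n" for i
      using that centers_in_interior[of i] by simp
  qed
qed

end
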